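(* Let $n\ge2$, $s\in[1/2,1)$ and $\sigma>0$. There exists $\delta>0$, depending on $\sigma$, $n$ and $s$, such that the following holds. Let $Q\subset\mathbb{R}^n$ be a cube and let $A,D$ be disjoint measurable subsets of $Q$ with $\min\{|A|,|D|\}\ge\sigma|Q|$, and let $B:=Q\setminus(A\cup D)$. Then $$L(A,D)\ge\begin{cases}\delta\,|Q|^{(n-1)/n}\log(|Q|/|B|) & \text{if } s=1/2,\\ \delta\,|Q|^{(n-2s)/n}\,(|Q|/|B|)^{2s-1} & \text{if } s\in(1/2,1).\end{cases}$$
   Context: For measurable $A,D\subset\mathbb{R}^n$, $L(A,D):=\int_A\int_D\frac{dx\,dy}{|x-y|^{n+2s}}$; $|\cdot|$ is Lebesgue measure. *)

theory Defs
  imports "HOL-Analysis.Analysis"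
begin

definition Lint :: "real \<Rightarrow> (real ^ 'n) set \<Rightarrow> (real ^ 'n) set \<Rightarrow> ennreal" where
  "Lint s A D = (\<integral>\<^sup>+ x. \<integral>\<^sup>+ y.
      indicator A x * indicator D y *
      ennreal (1 / (norm (x - y) powr (real CARD('n) + 2 * s))) \<partial>lebesgue \<partial>lebesgue)"

definition is_cube :: "(real ^ 'n) set \<Rightarrow> bool" where
  "is_cube Q \<longleftrightarrow> (\<exists>a r. r > 0 \<and> Q = cbox a (a + r *\<^sub>R One))"

text \<open>Right-hand side of the estimate; when |B| = 0 the right-hand side is +infinity
  (log(|Q|/0) = +infinity, (|Q|/0)^(2s-1) = +infinity).\<close>
definition rhs :: "nat \<Rightarrow> real \<Rightarrow> real \<Rightarrow> real \<Rightarrow> real \<Rightarrow> ennreal" where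
  "rhs n s \<delta> q b =
     (if b = 0 then \<infinity>
      else if s = 1/2 then ennreal (\<delta> * q powr ((real n - 1) / real n) * ln (q / b))
      else ennreal (\<delta> * q powr ((real n - 2 * s) / real n) * (q / b) powr (2 * s - 1)))"

end

theory Submission
  imports Defs
begin

text \<open>Let \<open>Q\<close> be a cube of side \<open>r\<close>, \<open>q = |Q|\<close>, \<open>B = Q - (A \<union> D)\<close>, and let \<open>G(\<rho>)\<close> be the
  integral of \<open>|A \<inter> (D - w)|\<close> over the shifts \<open>w\<close> with \<open>infnorm w \<le> \<rho>\<close>. For \<open>x \<in> A\<close> and
  \<open>x + w \<in> D\<close> the walk \<open>x, x + w/K, ..., x + w\<close> stays in the convex set \<open>Q\<close>, so it either steps
  from \<open>A\<close> directly into \<open>D\<close> or passes through \<open>B\<close>. Integrating over \<open>x\<close> and \<open>w\<close> gives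
  \<open>|A| |D| \<le> K^(n+1) G(r/K) + (K - 1) 2^n |B| q\<close>, so \<open>G(r/2^j) \<ge> \<sigma>\<^sup>2 q\<^sup>2 / (2 (2^j)^(n+1))\<close>
  as long as \<open>2^j |B|\<close> is small compared with \<open>\<sigma>\<^sup>2 q\<close>. The kernel \<open>|w|^(-n-2s)\<close> dominates
  a dyadic sum of multiples of the indicators of \<open>infnorm w \<le> r/2^j\<close>, which turns these bounds into
  \<open>L(A,D) \<ge> c r^(n-2s) (\<Sum>j\<le>J. 2^(j(2s-1)))\<close> with \<open>2^J\<close> comparable to \<open>\<sigma>\<^sup>2 q/|B|\<close>. For \<open>s = 1/2\<close>
  the \<open>J + 1\<close> equal terms give the logarithm, for \<open>s > 1/2\<close> the last term gives the power of
  \<open>q/|B|\<close>; if \<open>|B| = 0\<close> every \<open>J\<close> is admissible and \<open>L(A,D) = \<infinity>\<close>.\<close>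

section \<open>Translations and dilations of Lebesgue measure\<close>

lemma nn_integral_lborel_translate:
  fixes f :: "'a::euclidean_space \<Rightarrow> ennreal"
  assumes [measurable]: "f \<in> borel_measurable borel"
  shows "(\<integral>\<^sup>+x. f (x + t) \<partial>lborel) = (\<integral>\<^sup>+x. f x \<partial>lborel)"
  by (subst lborel_distr_plus[symmetric, of t]) (simp add: nn_integral_distr add.commute)

lemma nn_integral_lborel_affine:
  fixes f :: "'a::euclidean_space \<Rightarrow> ennreal"
  assumes [measurable]: "f \<in> borel_measurable borel" and c: "c \<noteq> 0"
  shows "(\<integral>\<^sup>+x. f (t + c *\<^sub>R x) \<partial>lborel) = ennreal (1 / \<bar>c\<bar> ^ DIM('a)) * (\<integral>\<^sup>+x. f x \<partial>lborel)"
proof -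
  have "(\<integral>\<^sup>+x. f x \<partial>lborel) = ennreal (\<bar>c\<bar> ^ DIM('a)) * (\<integral>\<^sup>+x. f (t + c *\<^sub>R x) \<partial>lborel)"
    by (subst lborel_affine[OF c, of t])
       (simp add: nn_integral_density nn_integral_distr nn_integral_cmult)
  moreover have "ennreal (1 / \<bar>c\<bar> ^ DIM('a)) * ennreal (\<bar>c\<bar> ^ DIM('a)) = 1"
    using c by (simp add: ennreal_mult'[symmetric])
  ultimately show ?thesis
    by (simp add: mult.assoc[symmetric])
qed

lemma nn_integral_indicator_dilated_pair:
  fixes B Q :: "'a::euclidean_space set"
  assumes [measurable]: "B \<in> sets borel" "Q \<in> sets borel" and c: "c \<noteq> 0"
  shows "(\<integral>\<^sup>+w. \<integral>\<^sup>+x. indicator B (x + c *\<^sub>R w) * indicator Q x \<partial>lborel \<partial>lborel)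
     = ennreal (1 / \<bar>c\<bar> ^ DIM('a)) * emeasure lborel B * emeasure lborel Q"
proof -
  have "(\<integral>\<^sup>+w. \<integral>\<^sup>+x. indicator B (x + c *\<^sub>R w) * indicator Q x \<partial>lborel \<partial>lborel)
     = (\<integral>\<^sup>+x. \<integral>\<^sup>+w. indicator B (x + c *\<^sub>R w) * indicator Q x \<partial>lborel \<partial>lborel)"
    by (rule lborel_pair.Fubini') measurable
  also have "\<dots> = (\<integral>\<^sup>+x. (\<integral>\<^sup>+w. indicator B (x + c *\<^sub>R w) \<partial>lborel) * indicator Q x \<partial>lborel)"
    by (intro nn_integral_cong nn_integral_multc) measurable
  also have "\<dots> = (\<integral>\<^sup>+x. ennreal (1 / \<bar>c\<bar> ^ DIM('a)) * emeasure lborel B * indicator Q x \<partial>lborel)"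
    by (intro nn_integral_cong) (simp add: nn_integral_lborel_affine[OF _ c])
  also have "\<dots> = ennreal (1 / \<bar>c\<bar> ^ DIM('a)) * emeasure lborel B * emeasure lborel Q"
    by (simp add: nn_integral_cmult)
  finally show ?thesis .
qed

lemma ennreal_inverse_power_le:
  fixes c :: real
  assumes "1/2 \<le> \<bar>c\<bar>"
  shows "ennreal (1 / \<bar>c\<bar> ^ n) \<le> 2 ^ n"
proof -
  have "1 / \<bar>c\<bar> ^ n = (1 / \<bar>c\<bar>) ^ n"
    by (simp add: power_one_over)
  also have "\<dots> \<le> 2 ^ n"
    using assms by (intro power_mono) (auto simp: field_simps)
  finally show ?thesis
    by (metis ennreal_le_iff ennreal_numeral ennreal_power zero_le_numeral zero_le_power)
qed

text \<open>Substituting \<open>w \<mapsto> x + t w\<close>, or for \<open>t < 1/2\<close> first \<open>x \<mapsto> x + w\<close> and then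
  \<open>w \<mapsto> x + (t - 1) w\<close>, the Jacobian factor is at most \<open>2^n\<close>.\<close>
lemma nn_integral_segment_point_le:
  fixes B Q :: "'a::euclidean_space set"
  assumes [measurable]: "B \<in> sets borel" "Q \<in> sets borel" and t: "0 < t" "t < 1"
  shows "(\<integral>\<^sup>+w. \<integral>\<^sup>+x. indicator B (x + t *\<^sub>R w) * indicator Q x * indicator Q (x + w) \<partial>lborel \<partial>lborel)
     \<le> 2 ^ DIM('a) * emeasure lborel B * emeasure lborel Q"
proof (cases "t \<ge> 1/2")
  case True
  have "(\<integral>\<^sup>+w. \<integral>\<^sup>+x. indicator B (x + t *\<^sub>R w) * indicator Q x * indicator Q (x + w) \<partial>lborel \<partial>lborel)
     \<le> (\<integral>\<^sup>+w. \<integral>\<^sup>+x. indicator B (x + t *\<^sub>R w) * indicator Q x \<partial>lborel \<partial>lborel)"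
    by (intro nn_integral_mono) (auto simp: indicator_def)
  also have "\<dots> = ennreal (1 / \<bar>t\<bar> ^ DIM('a)) * emeasure lborel B * emeasure lborel Q"
    using t by (intro nn_integral_indicator_dilated_pair) auto
  also have "\<dots> \<le> 2 ^ DIM('a) * emeasure lborel B * emeasure lborel Q"
    using True by (intro mult_right_mono ennreal_inverse_power_le) auto
  finally show ?thesis .
next
  case False
  have shift: "(\<integral>\<^sup>+x. indicator B (x + t *\<^sub>R w) * indicator Q (x + w) \<partial>lborel)
     = (\<integral>\<^sup>+x. indicator B (x + (t - 1) *\<^sub>R w) * indicator Q x \<partial>lborel)" for w
    using nn_integral_lborel_translate[of "\<lambda>y. indicator B (y + (t - 1) *\<^sub>R w) * indicator Q y" w]
    by (simp add: algebra_simps)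
  have "(\<integral>\<^sup>+w. \<integral>\<^sup>+x. indicator B (x + t *\<^sub>R w) * indicator Q x * indicator Q (x + w) \<partial>lborel \<partial>lborel)
     \<le> (\<integral>\<^sup>+w. \<integral>\<^sup>+x. indicator B (x + t *\<^sub>R w) * indicator Q (x + w) \<partial>lborel \<partial>lborel)"
    by (intro nn_integral_mono) (auto simp: indicator_def)
  also have "\<dots> = ennreal (1 / \<bar>t - 1\<bar> ^ DIM('a)) * emeasure lborel B * emeasure lborel Q"
    unfolding shift using t by (intro nn_integral_indicator_dilated_pair) auto
  also have "\<dots> \<le> 2 ^ DIM('a) * emeasure lborel B * emeasure lborel Q"
    using False by (intro mult_right_mono ennreal_inverse_power_le) auto
  finally show ?thesis .
qed

section \<open>The discretisation inequality\<close>

lemma ex_exit_step: "P 0 \<Longrightarrow> \<not> P k \<Longrightarrow> \<exists>j<k. P j \<and> \<not> P (Suc j)"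
  by (induction k) (auto intro: less_SucI)

lemma convex_walk_exits:
  fixes x w :: "'a::real_vector" and K :: nat
  assumes xA: "x \<in> A" and xwD: "x + w \<in> D" and AQ: "A \<subseteq> Q" and DQ: "D \<subseteq> Q"
    and disj: "A \<inter> D = {}" and cQ: "convex Q" and K: "K \<ge> 1"
  shows "\<exists>j<K. (x + (real j / real K) *\<^sub>R w \<in> A \<and> x + (real j / real K) *\<^sub>R w + (1 / real K) *\<^sub>R w \<in> D)
           \<or> (0 < j \<and> x + (real j / real K) *\<^sub>R w \<in> Q - (A \<union> D))"
proof -
  define z where "z j = x + (real j / real K) *\<^sub>R w" for j
  have zQ: "z j \<in> Q" if "j \<le> K" for j
  proof -
    have "(1 - real j / real K) *\<^sub>R x + (real j / real K) *\<^sub>R (x + w) \<in> Q"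
      using cQ xA xwD AQ DQ that K by (intro convexD) auto
    then show ?thesis
      by (simp add: z_def algebra_simps)
  qed
  have zS: "z (Suc j) = z j + (1 / real K) *\<^sub>R w" for j
    unfolding z_def by (simp add: add_divide_distrib scaleR_add_left)
  obtain j where j: "j < K" "z j \<in> A" "z (Suc j) \<notin> A"
    using ex_exit_step[of "\<lambda>j. z j \<in> A" K] xA xwD disj K by (auto simp: z_def)
  show ?thesis
  proof (cases "z (Suc j) \<in> D")
    case True
    then show ?thesis
      using j zS[of j] unfolding z_def by (intro exI[of _ j]) (auto simp: add.assoc)
  next
    case False
    have "Suc j \<noteq> K"
      using False xwD K by (auto simp: z_def)
    then show ?thesis
      using False j zQ[of "Suc j"] unfolding z_def by (intro exI[of _ "Suc j"]) auto
  qed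
qed

lemma One_nth: "(One :: real^'n) $ i = 1"
  by (metis one_index Cart_1)

definition centred_cube :: "real \<Rightarrow> (real^'n) set" where
  "centred_cube \<rho> = {w. \<forall>i. \<bar>w$i\<bar> \<le> \<rho>}"

lemma centred_cube_borel [measurable]: "centred_cube \<rho> \<in> sets borel"
  unfolding centred_cube_def by measurable

lemma diff_in_centred_cube:
  fixes a x y :: "real^'n"
  assumes "x \<in> cbox a (a + r *\<^sub>R One)" "y \<in> cbox a (a + r *\<^sub>R One)"
  shows "y - x \<in> centred_cube r"
proof -
  have "a$i \<le> z$i \<and> z$i \<le> a$i + r" if "z \<in> cbox a (a + r *\<^sub>R One)" for z i
    using that unfolding mem_box_cart(2)
    by (simp only: vector_add_component vector_scaleR_component One_nth) simp
  then have "a$i \<le> x$i \<and> x$i \<le> a$i + r" "a$i \<le> y$i \<and> y$i \<le> a$i + r" for i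
    using assms by blast+
  then show ?thesis
    unfolding centred_cube_def by (simp add: abs_le_iff) (smt (verit))
qed

lemma infnorm_le_if_centred_cube: "w \<in> centred_cube \<rho> \<Longrightarrow> infnorm (w::real^'n) \<le> \<rho>"
  unfolding infnorm_cart centred_cube_def by (intro cSup_least) auto

lemma indicator_centred_cube_scale:
  "K > 0 \<Longrightarrow> indicator (centred_cube r) w = (indicator (centred_cube (r / K)) ((1 / K) *\<^sub>R w) :: ennreal)"
  by (simp add: centred_cube_def indicator_def divide_le_cancel abs_div)

lemma emeasure_lborel_cube:
  fixes a :: "real^'n"
  assumes "r > 0"
  shows "emeasure lborel (cbox a (a + r *\<^sub>R One)) = ennreal (r ^ CARD('n))"
proof -
  have "\<forall>b\<in>Basis. a \<bullet> b \<le> (a + r *\<^sub>R One) \<bullet> b"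
    using assms by (simp add: inner_simps)
  then show ?thesis
    using assms by (simp add: emeasure_lborel_cbox_eq inner_simps)
qed

definition correlation :: "(real^'n) set \<Rightarrow> (real^'n) set \<Rightarrow> real^'n \<Rightarrow> ennreal" where
  "correlation A D w = (\<integral>\<^sup>+x. indicator A x * indicator D (x + w) \<partial>lborel)"

definition local_correlation :: "(real^'n) set \<Rightarrow> (real^'n) set \<Rightarrow> real \<Rightarrow> ennreal" where
  "local_correlation A D \<rho> = (\<integral>\<^sup>+w. indicator (centred_cube \<rho>) w * correlation A D w \<partial>lborel)"

lemma correlation_borel [measurable]:
  assumes [measurable]: "A \<in> sets borel" "D \<in> sets borel"
  shows "correlation A D \<in> borel_measurable borel"
  unfolding correlation_def by measurable

lemma emeasure_times_emeasure_eq_correlation: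
  fixes A D :: "(real^'n) set"
  assumes [measurable]: "A \<in> sets borel" "D \<in> sets borel"
  shows "emeasure lborel A * emeasure lborel D
       = (\<integral>\<^sup>+w. \<integral>\<^sup>+x. indicator A x * indicator D (x + w) \<partial>lborel \<partial>lborel)"
proof -
  have "emeasure lborel A * emeasure lborel D = (\<integral>\<^sup>+x. indicator A x * emeasure lborel D \<partial>lborel)"
    by (simp add: nn_integral_multc)
  also have "\<dots> = (\<integral>\<^sup>+x. \<integral>\<^sup>+w. indicator A x * indicator D (x + w) \<partial>lborel \<partial>lborel)"
  proof (intro nn_integral_cong)
    fix x
    have "(\<integral>\<^sup>+w. indicator D (x + w) \<partial>lborel) = emeasure lborel D"
      using nn_integral_lborel_translate[of "indicator D" x] by (simp add: add.commute)
    then show "indicator A x * emeasure lborel D = (\<integral>\<^sup>+w. indicator A x * indicator D (x + w) \<partial>lborel)"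
      by (simp add: nn_integral_cmult)
  qed
  also have "\<dots> = (\<integral>\<^sup>+w. \<integral>\<^sup>+x. indicator A x * indicator D (x + w) \<partial>lborel \<partial>lborel)"
    by (rule lborel_pair.Fubini'[symmetric]) measurable
  finally show ?thesis .
qed

text \<open>The walk \<open>x, x + w/K, \<dots>, x + w\<close> from \<open>A\<close> to \<open>D\<close> either makes one step from \<open>A\<close>
  directly into \<open>D\<close> or visits \<open>B = Q - (A \<union> D)\<close> at an interior node.\<close>
lemma indicator_pair_le_walk:
  fixes a x w :: "real^'n" and r :: real
  defines "Q \<equiv> cbox a (a + r *\<^sub>R One)"
  assumes AQ: "A \<subseteq> Q" and DQ: "D \<subseteq> Q" and disj: "A \<inter> D = {}" and K: "K \<ge> 1"
  shows "indicator A x * indicator D (x + w) \<le>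
    (\<Sum>j<K. indicator A (x + (real j / real K) *\<^sub>R w) * indicator D (x + (real j / real K) *\<^sub>R w + (1 / real K) *\<^sub>R w)
            * indicator (centred_cube r) w)
    + (\<Sum>j\<in>{1..<K}. indicator (Q - (A \<union> D)) (x + (real j / real K) *\<^sub>R w) * indicator Q x * indicator Q (x + w)
      :: ennreal)"
    (is "_ \<le> (\<Sum>j<K. ?T j) + (\<Sum>j\<in>{1..<K}. ?U j)")
proof (cases "x \<in> A \<and> x + w \<in> D")
  case True
  then have xQ: "x \<in> Q" "x + w \<in> Q"
    using AQ DQ by auto
  then have w: "w \<in> centred_cube r"
    using diff_in_centred_cube[of x a r "x + w"] unfolding Q_def by simp
  have "convex Q"
    unfolding Q_def by (rule convex_box)
  then obtain j where j: "j < K" and alt: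
    "(x + (real j / real K) *\<^sub>R w \<in> A \<and> x + (real j / real K) *\<^sub>R w + (1 / real K) *\<^sub>R w \<in> D)
     \<or> (0 < j \<and> x + (real j / real K) *\<^sub>R w \<in> Q - (A \<union> D))"
    using convex_walk_exits[of x A w D Q K] True AQ DQ disj K by blast
  from alt have "1 \<le> (\<Sum>j<K. ?T j) + (\<Sum>j\<in>{1..<K}. ?U j)"
  proof
    assume "x + (real j / real K) *\<^sub>R w \<in> A \<and> x + (real j / real K) *\<^sub>R w + (1 / real K) *\<^sub>R w \<in> D"
    then have "?T j = 1"
      using w by simp
    then have "1 \<le> (\<Sum>j<K. ?T j)"
      using member_le_sum[of j "{..<K}" ?T] j by simp
    then show ?thesis
      by (intro add_increasing2) auto
  next
    assume "0 < j \<and> x + (real j / real K) *\<^sub>R w \<in> Q - (A \<union> D)"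
    then have "?U j = 1" and "j \<in> {1..<K}"
      using xQ j by auto
    then have "1 \<le> (\<Sum>j\<in>{1..<K}. ?U j)"
      using member_le_sum[of j "{1..<K}" ?U] by simp
    then show ?thesis
      by (intro add_increasing) auto
  qed
  then show ?thesis
    using True by simp
next
  case False
  then show ?thesis
    by (simp add: indicator_def)
qed

lemma nn_integral_walk_step:
  fixes A D :: "(real^'n) set"
  assumes [measurable]: "A \<in> sets borel" "D \<in> sets borel" and K: "K \<ge> 1"
  shows "(\<integral>\<^sup>+w. \<integral>\<^sup>+x. indicator A (x + (real j / real K) *\<^sub>R w)
            * indicator D (x + (real j / real K) *\<^sub>R w + (1 / real K) *\<^sub>R w)
            * indicator (centred_cube r) w \<partial>lborel \<partial>lborel)
       = ennreal (real K ^ CARD('n)) * local_correlation A D (r / real K)"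
proof -
  have inner: "(\<integral>\<^sup>+x. indicator A (x + (real j / real K) *\<^sub>R w)
            * indicator D (x + (real j / real K) *\<^sub>R w + (1 / real K) *\<^sub>R w)
            * indicator (centred_cube r) w \<partial>lborel)
     = indicator (centred_cube (r / real K)) (0 + (1 / real K) *\<^sub>R w)
       * correlation A D (0 + (1 / real K) *\<^sub>R w)" for w
  proof -
    have "(\<integral>\<^sup>+x. indicator A (x + (real j / real K) *\<^sub>R w)
            * indicator D (x + (real j / real K) *\<^sub>R w + (1 / real K) *\<^sub>R w) \<partial>lborel)
       = correlation A D ((1 / real K) *\<^sub>R w)"
      unfolding correlation_def
      by (rule nn_integral_lborel_translate[where f="\<lambda>y. indicator A y * indicator D (y + _)"])
         measurable
    moreover have "indicator (centred_cube r) w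
        = (indicator (centred_cube (r / real K)) ((1 / real K) *\<^sub>R w) :: ennreal)"
      using K by (intro indicator_centred_cube_scale) auto
    ultimately show ?thesis
      by (subst nn_integral_multc) (measurable, simp add: mult.commute)
  qed
  have "(\<integral>\<^sup>+w. indicator (centred_cube (r / real K)) (0 + (1 / real K) *\<^sub>R w)
          * correlation A D (0 + (1 / real K) *\<^sub>R w) \<partial>lborel)
      = ennreal (1 / \<bar>1 / real K\<bar> ^ CARD('n)) * local_correlation A D (r / real K)"
    unfolding local_correlation_def using K
    by (subst nn_integral_lborel_affine[where f="\<lambda>v. indicator (centred_cube _) v * correlation A D v"])
       auto
  then show ?thesis
    using K by (simp add: inner power_one_over)
qed

lemma emeasure_times_emeasure_le_local_correlation:
  fixes A D :: "(real^'n) set" and a :: "real^'n" and r :: real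
  defines "Q \<equiv> cbox a (a + r *\<^sub>R One)"
  assumes [measurable]: "A \<in> sets borel" "D \<in> sets borel"
    and AQ: "A \<subseteq> Q" and DQ: "D \<subseteq> Q" and disj: "A \<inter> D = {}" and K: "K \<ge> 1"
  shows "emeasure lborel A * emeasure lborel D
     \<le> ennreal (real K ^ (CARD('n) + 1)) * local_correlation A D (r / real K)
       + of_nat (K - 1) * (2 ^ CARD('n) * emeasure lborel (Q - (A \<union> D)) * emeasure lborel Q)"
proof -
  define T :: "nat \<Rightarrow> real^'n \<Rightarrow> real^'n \<Rightarrow> ennreal" where
    "T j x w = indicator A (x + (real j / real K) *\<^sub>R w)
      * indicator D (x + (real j / real K) *\<^sub>R w + (1 / real K) *\<^sub>R w) * indicator (centred_cube r) w"
    for j x w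
  define U :: "nat \<Rightarrow> real^'n \<Rightarrow> real^'n \<Rightarrow> ennreal" where
    "U j x w = indicator (Q - (A \<union> D)) (x + (real j / real K) *\<^sub>R w) * indicator Q x * indicator Q (x + w)"
    for j x w
  have [measurable]: "Q \<in> sets borel"
    unfolding Q_def by simp
  have [measurable]: "case_prod (T j) \<in> borel_measurable (lborel \<Otimes>\<^sub>M lborel)"
    "case_prod (U j) \<in> borel_measurable (lborel \<Otimes>\<^sub>M lborel)" for j
    unfolding T_def U_def by measurable
  have "emeasure lborel A * emeasure lborel D
      = (\<integral>\<^sup>+w. \<integral>\<^sup>+x. indicator A x * indicator D (x + w) \<partial>lborel \<partial>lborel)"
    by (rule emeasure_times_emeasure_eq_correlation) measurable
  also have "\<dots> \<le> (\<integral>\<^sup>+w. \<integral>\<^sup>+x. (\<Sum>j<K. T j x w) + (\<Sum>j\<in>{1..<K}. U j x w) \<partial>lborel \<partial>lborel)"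
  proof (intro nn_integral_mono)
    show "indicator A x * indicator D (x + w) \<le> (\<Sum>j<K. T j x w) + (\<Sum>j\<in>{1..<K}. U j x w)" for x w
      unfolding T_def U_def Q_def
      by (rule indicator_pair_le_walk) (use AQ DQ disj K in \<open>simp_all add: Q_def\<close>)
  qed
  also have "\<dots> = (\<integral>\<^sup>+w. (\<Sum>j<K. \<integral>\<^sup>+x. T j x w \<partial>lborel) + (\<Sum>j\<in>{1..<K}. \<integral>\<^sup>+x. U j x w \<partial>lborel) \<partial>lborel)"
    by (intro nn_integral_cong) (simp add: nn_integral_add nn_integral_sum)
  also have "\<dots> = (\<Sum>j<K. \<integral>\<^sup>+w. \<integral>\<^sup>+x. T j x w \<partial>lborel \<partial>lborel)
      + (\<Sum>j\<in>{1..<K}. \<integral>\<^sup>+w. \<integral>\<^sup>+x. U j x w \<partial>lborel \<partial>lborel)"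
    by (simp add: nn_integral_add nn_integral_sum)
  also have "\<dots> \<le> (\<Sum>j<K. ennreal (real K ^ CARD('n)) * local_correlation A D (r / real K))
      + (\<Sum>j\<in>{1..<K}. 2 ^ CARD('n) * emeasure lborel (Q - (A \<union> D)) * emeasure lborel Q)"
  proof (intro add_mono sum_mono)
    show "(\<integral>\<^sup>+w. \<integral>\<^sup>+x. T j x w \<partial>lborel \<partial>lborel)
        \<le> ennreal (real K ^ CARD('n)) * local_correlation A D (r / real K)" for j
      unfolding T_def using K by (simp add: nn_integral_walk_step)
    show "(\<integral>\<^sup>+w. \<integral>\<^sup>+x. U j x w \<partial>lborel \<partial>lborel)
        \<le> 2 ^ CARD('n) * emeasure lborel (Q - (A \<union> D)) * emeasure lborel Q" if "j \<in> {1..<K}" for j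
      unfolding U_def using nn_integral_segment_point_le[of "Q - (A \<union> D)" Q "real j / real K"] that
      by simp
  qed
  also have "\<dots> = ennreal (real K ^ (CARD('n) + 1)) * local_correlation A D (r / real K)
       + of_nat (K - 1) * (2 ^ CARD('n) * emeasure lborel (Q - (A \<union> D)) * emeasure lborel Q)"
  proof -
    have "of_nat K * (ennreal (real K ^ CARD('n)) * local_correlation A D (r / real K))
        = ennreal (real K ^ (CARD('n) + 1)) * local_correlation A D (r / real K)"
      by (simp add: mult.assoc[symmetric] ennreal_of_nat_eq_real_of_nat ennreal_mult'[symmetric] mult.commute)
    then show ?thesis
      by simp
  qed
  finally show ?thesis .
qed

lemma ennreal_half_le_of_le_add:
  fixes X Z :: real and Y :: ennreal
  assumes "ennreal X \<le> Y + ennreal Z" "Z \<le> X / 2" "0 \<le> Z"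
  shows "ennreal (X / 2) \<le> Y"
proof -
  have "ennreal (X / 2) + ennreal Z \<le> ennreal (X / 2) + ennreal (X / 2)"
    using assms by (intro add_left_mono ennreal_leI) auto
  also have "\<dots> = ennreal X"
    using assms by (simp add: ennreal_plus[symmetric] del: ennreal_plus)
  also have "\<dots> \<le> Y + ennreal Z"
    by fact
  finally show ?thesis
    by (simp add: ennreal_add_left_cancel_le add.commute)
qed

lemma local_correlation_lower:
  fixes A D :: "(real^'n) set" and a :: "real^'n" and r \<sigma> :: real
  defines "Q \<equiv> cbox a (a + r *\<^sub>R One)"
  assumes [measurable]: "A \<in> sets borel" "D \<in> sets borel"
    and AQ: "A \<subseteq> Q" and DQ: "D \<subseteq> Q" and disj: "A \<inter> D = {}" and r: "r > 0" and K: "K \<ge> 1"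
    and \<sigma>: "\<sigma> \<ge> 0" and mA: "\<sigma> * r ^ CARD('n) \<le> measure lborel A" and mD: "\<sigma> * r ^ CARD('n) \<le> measure lborel D"
    and gap: "(real K - 1) * 2 ^ CARD('n) * measure lborel (Q - (A \<union> D)) \<le> \<sigma>\<^sup>2 * r ^ CARD('n) / 2"
  shows "ennreal (\<sigma>\<^sup>2 * (r ^ CARD('n))\<^sup>2 / 2)
     \<le> ennreal (real K ^ (CARD('n) + 1)) * local_correlation A D (r / real K)"
proof -
  define q where "q = r ^ CARD('n)"
  define Z where "Z = (real K - 1) * 2 ^ CARD('n) * measure lborel (Q - (A \<union> D)) * q"
  have q: "q > 0"
    using r by (simp add: q_def)
  have fin: "emeasure lborel X = ennreal (measure lborel X)" if "X \<subseteq> Q" for X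
  proof -
    have "bounded X"
      using that bounded_subset[OF bounded_cbox] unfolding Q_def by blast
    then show ?thesis
      using emeasure_bounded_finite[of X] by (intro emeasure_eq_ennreal_measure) auto
  qed
  have "ennreal (\<sigma>\<^sup>2 * q\<^sup>2) \<le> emeasure lborel A * emeasure lborel D"
  proof -
    have "(\<sigma> * q) * (\<sigma> * q) \<le> measure lborel A * measure lborel D"
      using mA mD \<sigma> q unfolding q_def by (intro mult_mono) auto
    then show ?thesis
      using AQ DQ by (simp add: fin power2_eq_square mult_ac ennreal_mult[symmetric])
  qed
  also have "\<dots> \<le> ennreal (real K ^ (CARD('n) + 1)) * local_correlation A D (r / real K) + ennreal Z"
  proof -
    have "(of_nat (K - 1) :: ennreal) = ennreal (real K - 1)"
      using K by (metis ennreal_of_nat_eq_real_of_nat of_nat_1 of_nat_diff)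
    moreover have "(2 ^ CARD('n) :: ennreal) = ennreal (2 ^ CARD('n))"
      by (subst ennreal_power[symmetric]) auto
    moreover have "emeasure lborel (Q - (A \<union> D)) = ennreal (measure lborel (Q - (A \<union> D)))"
      by (rule fin) auto
    moreover have "emeasure lborel Q = ennreal q"
      unfolding Q_def q_def by (rule emeasure_lborel_cube[OF r])
    ultimately have "of_nat (K - 1) * (2 ^ CARD('n) * emeasure lborel (Q - (A \<union> D)) * emeasure lborel Q)
        = ennreal Z"
      using K q by (simp add: Z_def ennreal_mult'[symmetric] mult.assoc)
    then show ?thesis
      using emeasure_times_emeasure_le_local_correlation[of A D a r K] AQ DQ disj K
      unfolding Q_def by simp
  qed
  finally have "ennreal (\<sigma>\<^sup>2 * q\<^sup>2) \<le> ennreal (real K ^ (CARD('n) + 1)) * local_correlation A D (r / real K) + ennreal Z" .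
  moreover have "Z \<le> \<sigma>\<^sup>2 * q\<^sup>2 / 2"
    using mult_right_mono[OF gap, of q] q by (simp add: Z_def q_def power2_eq_square)
  moreover have "Z \<ge> 0"
    using K q by (simp add: Z_def)
  ultimately show ?thesis
    unfolding q_def by (rule ennreal_half_le_of_le_add)
qed

section \<open>A dyadic minorant of the kernel\<close>

lemma sum_doubling_below_le:
  fixes a :: "nat \<Rightarrow> real"
  assumes M: "M \<ge> 0" and a0: "\<And>j. a j \<ge> 0" and aS: "\<And>j. a (Suc j) \<ge> 2 * a j"
  shows "(\<Sum>j\<le>J. if a j \<le> M then a j else 0) \<le> 2 * min M (a J)"
proof (induction J)
  case 0
  show ?case
    using a0[of 0] M by (cases "a 0 \<le> M") (auto simp: min_def)
next
  case (Suc J)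
  then show ?case
    using a0[of J] a0[of "Suc J"] aS[of J] M
    by (cases "a (Suc J) \<le> M"; cases "M \<le> a J"; cases "M \<le> a (Suc J)"; simp add: min_def; linarith)
qed

text \<open>At \<open>w \<noteq> 0\<close> the non-vanishing terms grow at least geometrically with ratio 2 and are
  bounded by \<open>infnorm w powr -p\<close>, while \<open>norm w \<le> sqrt n * infnorm w\<close>.\<close>
lemma dyadic_kernel_le:
  fixes w :: "real^'n" and r p :: real
  assumes w: "w \<noteq> 0" and r: "r > 0" and p: "p \<ge> 1"
  shows "(\<Sum>j\<le>J. (1/2) * sqrt (real CARD('n)) powr (-p) * (2^j / r) powr p * indicator (centred_cube (r / 2^j)) w)
           \<le> 1 / norm w powr p"
proof -
  define m where "m = infnorm w"
  define c where "c = (1/2) * sqrt (real CARD('n)) powr (-p)"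
  define a where "a j = (2^j / r) powr p" for j :: nat
  have m: "m > 0"
    using w by (simp add: m_def infnorm_pos_lt)
  have c: "c \<ge> 0"
    by (simp add: c_def)
  have a_le: "a j \<le> m powr (-p)" if "m \<le> r / 2^j" for j
  proof -
    have "a j \<le> (1 / m) powr p"
      unfolding a_def using that m r p by (intro powr_mono2) (auto simp: field_simps)
    then show ?thesis
      using m by (simp add: powr_minus_divide powr_divide)
  qed
  have aS: "a (Suc j) \<ge> 2 * a j" for j
  proof -
    have "a (Suc j) = 2 powr p * a j"
      unfolding a_def using r by (simp add: powr_mult[symmetric] mult.assoc)
    moreover have "2 \<le> (2::real) powr p"
      using powr_mono[OF p, of 2] by simp
    ultimately show ?thesis
      by (simp add: a_def mult_right_mono)
  qed
  have "(\<Sum>j\<le>J. c * (2^j / r) powr p * indicator (centred_cube (r / 2^j)) w)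
      \<le> (\<Sum>j\<le>J. c * (if a j \<le> m powr (-p) then a j else 0))"
  proof (intro sum_mono)
    fix j
    show "c * (2^j / r) powr p * indicator (centred_cube (r / 2^j)) w
        \<le> c * (if a j \<le> m powr (-p) then a j else 0)"
      using infnorm_le_if_centred_cube[of w "r / 2^j"] a_le[of j] c
      by (auto simp: m_def a_def indicator_def)
  qed
  also have "\<dots> \<le> c * (2 * m powr (-p))"
    using sum_doubling_below_le[of "m powr (-p)" a J] aS c
    by (auto simp: sum_distrib_left[symmetric] a_def intro!: mult_left_mono)
  also have "\<dots> = 1 / (sqrt (real CARD('n)) * m) powr p"
    unfolding c_def using m by (simp add: powr_mult powr_minus_divide)
  also have "\<dots> \<le> 1 / norm w powr p"
    using norm_le_infnorm[of w] w p unfolding m_def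
    by (intro divide_left_mono powr_mono2 mult_pos_pos) auto
  finally show ?thesis
    by (simp add: c_def)
qed

lemma nn_integral_correlation_le_kernel:
  fixes A D :: "(real^'n) set" and \<phi> :: "real^'n \<Rightarrow> ennreal" and p :: real
  assumes [measurable]: "A \<in> sets borel" "D \<in> sets borel" "\<phi> \<in> borel_measurable borel"
    and disj: "A \<inter> D = {}" and \<phi>: "\<And>w. w \<noteq> 0 \<Longrightarrow> \<phi> w \<le> ennreal (1 / norm w powr p)"
  shows "(\<integral>\<^sup>+w. \<phi> w * correlation A D w \<partial>lborel) \<le>
    (\<integral>\<^sup>+x. \<integral>\<^sup>+y. indicator A x * indicator D y * ennreal (1 / norm (x - y) powr p) \<partial>lborel \<partial>lborel)"
proof -
  have "(\<integral>\<^sup>+w. \<phi> w * correlation A D w \<partial>lborel)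
      = (\<integral>\<^sup>+w. \<integral>\<^sup>+x. indicator A x * indicator D (x + w) * \<phi> w \<partial>lborel \<partial>lborel)"
    unfolding correlation_def
    by (intro nn_integral_cong) (simp add: nn_integral_cmult[symmetric] mult.commute mult.left_commute)
  also have "\<dots> = (\<integral>\<^sup>+x. \<integral>\<^sup>+w. indicator A x * indicator D (x + w) * \<phi> w \<partial>lborel \<partial>lborel)"
    by (rule lborel_pair.Fubini') measurable
  also have "\<dots> \<le> (\<integral>\<^sup>+x. \<integral>\<^sup>+w. indicator A x * indicator D (w + x) * ennreal (1 / norm (x - (w + x)) powr p)
      \<partial>lborel \<partial>lborel)"
  proof (intro nn_integral_mono)
    fix x w
    show "indicator A x * indicator D (x + w) * \<phi> w
        \<le> indicator A x * indicator D (w + x) * ennreal (1 / norm (x - (w + x)) powr p)"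
    proof (cases "x \<in> A \<and> x + w \<in> D")
      case True
      then have "w \<noteq> 0"
        using disj by auto
      then show ?thesis
        using True \<phi>[of w] by (simp add: add.commute)
    next
      case False
      then show ?thesis
        by (auto simp: indicator_def add.commute)
    qed
  qed
  also have "\<dots> = (\<integral>\<^sup>+x. \<integral>\<^sup>+y. indicator A x * indicator D y * ennreal (1 / norm (x - y) powr p) \<partial>lborel \<partial>lborel)"
  proof (rule nn_integral_cong)
    fix x :: "real^'n"
    assume "x \<in> space lborel"
    have "(\<lambda>y. indicator A x * indicator D y * ennreal (1 / norm (x - y) powr p)) \<in> borel_measurable borel"
      by measurable
    from nn_integral_lborel_translate[OF this, of x]
    show "(\<integral>\<^sup>+w. indicator A x * indicator D (w + x) * ennreal (1 / norm (x - (w + x)) powr p) \<partial>lborel)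
        = (\<integral>\<^sup>+y. indicator A x * indicator D y * ennreal (1 / norm (x - y) powr p) \<partial>lborel)" .
  qed
  finally show ?thesis .
qed

section \<open>The lower bound\<close>

lemma Lint_eq_lborel:
  fixes A D :: "(real^'n) set"
  shows "Lint s A D = (\<integral>\<^sup>+x. \<integral>\<^sup>+y. indicator A x * indicator D y
      * ennreal (1 / norm (x - y) powr (real CARD('n) + 2 * s)) \<partial>lborel \<partial>lborel)"
  unfolding Lint_def by (simp only: nn_integral_completion)

lemma ennreal_rescale_le:
  fixes G :: ennreal
  assumes "0 < k" "0 \<le> c" "ennreal a \<le> ennreal k * G"
  shows "ennreal (c / k * a) \<le> ennreal c * G"
proof -
  have "ennreal (c / k * a) = ennreal (c / k) * ennreal a"
    using assms by (intro ennreal_mult') auto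
  also have "\<dots> \<le> ennreal (c / k) * (ennreal k * G)"
    using assms(3) by (rule mult_left_mono) simp
  also have "\<dots> = ennreal c * G"
    using assms by (simp add: mult.assoc[symmetric] ennreal_mult'[symmetric])
  finally show ?thesis .
qed

lemma dyadic_weight_eq:
  fixes r K C \<sigma> s :: real and n :: nat
  assumes r: "r > 0" and K: "K > 0"
  shows "((1/2) * C * (K / r) powr (real n + 2 * s)) / K ^ (n + 1) * (\<sigma>\<^sup>2 * (r ^ n)\<^sup>2 / 2)
     = (1/4) * C * \<sigma>\<^sup>2 * r powr (real n - 2 * s) * K powr (2 * s - 1)"
proof -
  have e1: "(K / r) powr (real n + 2 * s) = K powr (real n + 2 * s) / r powr (real n + 2 * s)"
    using r K by (simp add: powr_divide)
  have e2: "K ^ (n + 1) = K powr (real n + 1)"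
    using powr_realpow[OF K, of "n + 1"] by (simp add: add.commute)
  have e3: "(r ^ n)\<^sup>2 = r powr (2 * real n)"
    using powr_realpow[OF r, of "n * 2"] by (simp add: power_mult mult.commute)
  have e4: "K powr (real n + 2 * s) / K powr (real n + 1) = K powr (2 * s - 1)"
    using K by (simp add: powr_diff[symmetric])
  have e5: "r powr (2 * real n) / r powr (real n + 2 * s) = r powr (real n - 2 * s)"
    using r by (simp add: powr_diff[symmetric])
  have regroup: "((1/2) * C * (a / d)) / b * (\<sigma>\<^sup>2 * c / 2) = (1/4) * C * \<sigma>\<^sup>2 * (c / d) * (a / b)"
    if "b \<noteq> 0" "d \<noteq> 0" for a b c d :: real
    using that by (simp add: field_simps)
  have "((1/2) * C * (K powr (real n + 2 * s) / r powr (real n + 2 * s))) / K powr (real n + 1)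
        * (\<sigma>\<^sup>2 * r powr (2 * real n) / 2)
      = (1/4) * C * \<sigma>\<^sup>2 * (r powr (2 * real n) / r powr (real n + 2 * s))
        * (K powr (real n + 2 * s) / K powr (real n + 1))"
    using r K by (intro regroup) auto
  then show ?thesis
    unfolding e1 e2 e3 e4 e5 .
qed

definition dyadic_const :: "nat \<Rightarrow> real \<Rightarrow> real \<Rightarrow> real" where
  "dyadic_const n s \<sigma> = (1/4) * sqrt (real n) powr (-(real n + 2 * s)) * \<sigma>\<^sup>2"

definition dyadic_weight :: "nat \<Rightarrow> real \<Rightarrow> real \<Rightarrow> nat \<Rightarrow> real" where
  "dyadic_weight n s r j = (1/2) * sqrt (real n) powr (-(real n + 2 * s)) * (2 ^ j / r) powr (real n + 2 * s)"

lemma dyadic_term_le_local_correlation: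
  fixes A D :: "(real^'n) set" and a :: "real^'n" and r \<sigma> s :: real
  defines "Q \<equiv> cbox a (a + r *\<^sub>R One)"
  assumes [measurable]: "A \<in> sets borel" "D \<in> sets borel"
    and AQ: "A \<subseteq> Q" and DQ: "D \<subseteq> Q" and disj: "A \<inter> D = {}" and r: "r > 0"
    and \<sigma>: "\<sigma> \<ge> 0" and mA: "\<sigma> * r ^ CARD('n) \<le> measure lborel A" and mD: "\<sigma> * r ^ CARD('n) \<le> measure lborel D"
    and gap: "(2 ^ j - 1) * 2 ^ CARD('n) * measure lborel (Q - (A \<union> D)) \<le> \<sigma>\<^sup>2 * r ^ CARD('n) / 2"
  shows "ennreal (dyadic_const CARD('n) s \<sigma> * r powr (real CARD('n) - 2 * s) * (2 ^ j) powr (2 * s - 1))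
     \<le> ennreal (dyadic_weight CARD('n) s r j) * local_correlation A D (r / 2 ^ j)"
proof -
  have lower: "ennreal (\<sigma>\<^sup>2 * (r ^ CARD('n))\<^sup>2 / 2)
      \<le> ennreal ((2 ^ j) ^ (CARD('n) + 1)) * local_correlation A D (r / 2 ^ j)"
    using local_correlation_lower[of A D a r "2 ^ j" \<sigma>] gap AQ DQ disj r \<sigma> mA mD unfolding Q_def by simp
  have "dyadic_weight CARD('n) s r j / (2 ^ j) ^ (CARD('n) + 1) * (\<sigma>\<^sup>2 * (r ^ CARD('n))\<^sup>2 / 2)
      = dyadic_const CARD('n) s \<sigma> * r powr (real CARD('n) - 2 * s) * (2 ^ j) powr (2 * s - 1)"
    unfolding dyadic_weight_def dyadic_const_def by (rule dyadic_weight_eq[OF r]) simp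
  moreover have "ennreal (dyadic_weight CARD('n) s r j / (2 ^ j) ^ (CARD('n) + 1) * (\<sigma>\<^sup>2 * (r ^ CARD('n))\<^sup>2 / 2))
      \<le> ennreal (dyadic_weight CARD('n) s r j) * local_correlation A D (r / 2 ^ j)"
    by (rule ennreal_rescale_le[OF _ _ lower]) (simp_all add: dyadic_weight_def)
  ultimately show ?thesis
    by simp
qed

lemma Lint_ge_dyadic_sum:
  fixes A D :: "(real^'n) set" and a :: "real^'n" and r \<sigma> s :: real
  defines "Q \<equiv> cbox a (a + r *\<^sub>R One)"
  assumes [measurable]: "A \<in> sets borel" "D \<in> sets borel"
    and AQ: "A \<subseteq> Q" and DQ: "D \<subseteq> Q" and disj: "A \<inter> D = {}" and r: "r > 0" and s: "s \<ge> 1/2"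
    and \<sigma>: "\<sigma> \<ge> 0" and mA: "\<sigma> * r ^ CARD('n) \<le> measure lborel A" and mD: "\<sigma> * r ^ CARD('n) \<le> measure lborel D"
    and gap: "(2 ^ J - 1) * 2 ^ CARD('n) * measure lborel (Q - (A \<union> D)) \<le> \<sigma>\<^sup>2 * r ^ CARD('n) / 2"
  shows "ennreal (\<Sum>j\<le>J. dyadic_const CARD('n) s \<sigma> * r powr (real CARD('n) - 2 * s) * (2 ^ j) powr (2 * s - 1))
     \<le> Lint s A D"
proof -
  define c where "c = dyadic_weight CARD('n) s r"
  define \<phi> where "\<phi> w = (\<Sum>j\<le>J. ennreal (c j) * indicator (centred_cube (r / 2 ^ j)) w)" for w :: "real^'n"
  have [measurable]: "\<phi> \<in> borel_measurable borel"
    unfolding \<phi>_def by measurable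
  have \<phi>_le: "\<phi> w \<le> ennreal (1 / norm w powr (real CARD('n) + 2 * s))" if "w \<noteq> 0" for w
  proof -
    have "\<phi> w = (\<Sum>j\<le>J. ennreal (c j * indicator (centred_cube (r / 2 ^ j)) w))"
      unfolding \<phi>_def by (intro sum.cong refl) (simp add: indicator_def)
    also have "\<dots> = ennreal (\<Sum>j\<le>J. c j * indicator (centred_cube (r / 2 ^ j)) w)"
      by (rule sum_ennreal) (simp add: c_def dyadic_weight_def)
    also have "\<dots> \<le> ennreal (1 / norm w powr (real CARD('n) + 2 * s))"
      using dyadic_kernel_le[OF that r, of "real CARD('n) + 2 * s" J] s
      by (intro ennreal_leI) (simp add: c_def dyadic_weight_def mult.assoc)
    finally show ?thesis .
  qed
  have gap_j: "(2 ^ j - 1) * 2 ^ CARD('n) * measure lborel (Q - (A \<union> D)) \<le> \<sigma>\<^sup>2 * r ^ CARD('n) / 2"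
    if "j \<le> J" for j
  proof -
    have "(2::real) ^ j \<le> 2 ^ J"
      using that by (intro power_increasing) auto
    then have "(2 ^ j - 1) * 2 ^ CARD('n) * measure lborel (Q - (A \<union> D))
        \<le> (2 ^ J - 1) * 2 ^ CARD('n) * measure lborel (Q - (A \<union> D))"
      by (intro mult_right_mono) auto
    then show ?thesis
      using gap by linarith
  qed
  have "ennreal (\<Sum>j\<le>J. dyadic_const CARD('n) s \<sigma> * r powr (real CARD('n) - 2 * s) * (2 ^ j) powr (2 * s - 1))
      = (\<Sum>j\<le>J. ennreal (dyadic_const CARD('n) s \<sigma> * r powr (real CARD('n) - 2 * s) * (2 ^ j) powr (2 * s - 1)))"
    by (subst sum_ennreal[symmetric]) (auto simp: dyadic_const_def)
  also have "\<dots> \<le> (\<Sum>j\<le>J. ennreal (c j) * local_correlation A D (r / 2 ^ j))"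
    unfolding c_def Q_def
    by (intro sum_mono dyadic_term_le_local_correlation)
       (use AQ DQ disj r \<sigma> mA mD gap_j in \<open>auto simp: Q_def\<close>)
  also have "\<dots> = (\<integral>\<^sup>+w. \<phi> w * correlation A D w \<partial>lborel)"
  proof -
    have "(\<integral>\<^sup>+w. \<phi> w * correlation A D w \<partial>lborel)
        = (\<integral>\<^sup>+w. (\<Sum>j\<le>J. ennreal (c j) * (indicator (centred_cube (r / 2 ^ j)) w * correlation A D w)) \<partial>lborel)"
      unfolding \<phi>_def by (intro nn_integral_cong) (simp only: sum_distrib_right mult.assoc)
    also have "\<dots> = (\<Sum>j\<le>J. ennreal (c j) * local_correlation A D (r / 2 ^ j))"
      unfolding local_correlation_def by (subst nn_integral_sum) (measurable, simp add: nn_integral_cmult)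
    finally show ?thesis
      by simp
  qed
  also have "\<dots> \<le> Lint s A D"
    unfolding Lint_eq_lborel using \<phi>_le disj by (intro nn_integral_correlation_le_kernel) auto
  finally show ?thesis .
qed

definition interaction_delta :: "nat \<Rightarrow> real \<Rightarrow> real \<Rightarrow> real" where
  "interaction_delta n s \<sigma> =
     (if s = 1/2 then dyadic_const n s \<sigma> / (ln 2 + \<bar>ln (2 ^ (n + 1) / \<sigma>\<^sup>2)\<bar>)
      else dyadic_const n s \<sigma> * (\<sigma>\<^sup>2 / 2 ^ (n + 2)) powr (2 * s - 1))"

lemma interaction_delta_pos: "\<sigma> > 0 \<Longrightarrow> n \<ge> 1 \<Longrightarrow> interaction_delta n s \<sigma> > 0"
  unfolding interaction_delta_def dyadic_const_def by (auto intro!: divide_pos_pos add_pos_nonneg)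

lemma power_powr_divide:
  fixes r :: real
  assumes "r > 0" "n \<ge> 1"
  shows "(r ^ n) powr (a / real n) = r powr a"
  using assms by (simp add: powr_realpow[symmetric] powr_powr)

lemma ex_dyadic_bracket:
  fixes X :: real
  assumes "X > 0"
  obtains J :: nat where "2 ^ J \<le> max 1 X" "X < 2 ^ Suc J"
proof (cases "X < 1")
  case True
  then show ?thesis
    using that[of 0] by simp
next
  case False
  define J where "J = nat \<lfloor>log 2 X\<rfloor>"
  have "real J = \<lfloor>log 2 X\<rfloor>"
    using False by (simp add: J_def)
  then have "2 powr real J \<le> X \<and> X < 2 powr (real J + 1)"
    using floor_log_eq_powr_iff[of X 2 "\<lfloor>log 2 X\<rfloor>"] assms by simp
  moreover have "2 powr real J = (2::real) ^ J"
    by (simp add: powr_realpow)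
  moreover have "2 powr (real J + 1) = (2::real) ^ Suc J"
    using powr_realpow[of 2 "Suc J"] by (simp add: add.commute)
  ultimately show ?thesis
    using that[of J] by auto
qed

lemma rhs_le_dyadic_sum_half:
  fixes r \<sigma> b :: real
  assumes n: "n \<ge> 1" and r: "r > 0" and \<sigma>: "\<sigma> > 0" and b: "b > 0"
    and J: "\<sigma>\<^sup>2 * r ^ n / (2 ^ (n + 1) * b) < 2 ^ Suc J"
  shows "rhs n (1/2) (interaction_delta n (1/2) \<sigma>) (r ^ n) b
     \<le> ennreal (\<Sum>j\<le>J. dyadic_const n (1/2) \<sigma> * r powr (real n - 2 * (1/2)) * (2 ^ j) powr (2 * (1/2) - 1))"
proof -
  define X where "X = \<sigma>\<^sup>2 * r ^ n / (2 ^ (n + 1) * b)"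
  define C where "C = ln (2 ^ (n + 1) / \<sigma>\<^sup>2)"
  define E where "E = dyadic_const n (1/2) \<sigma>"
  have X: "X > 0"
    using \<sigma> r b by (simp add: X_def)
  have eq: "r ^ n / b = X * (2 ^ (n + 1) / \<sigma>\<^sup>2)"
    using \<sigma> b by (simp add: X_def field_simps)
  have "0 < 2 ^ (n + 1) / \<sigma>\<^sup>2"
    using \<sigma> by simp
  then have "ln (r ^ n / b) = ln X + C"
    unfolding C_def by (subst eq) (rule ln_mult_pos[OF X])
  also have "ln X + C \<le> real (Suc J) * (ln 2 + \<bar>C\<bar>)"
  proof -
    have "ln X < ln (2 ^ Suc J)"
      using X J by (simp add: X_def)
    then have "ln X \<le> real (Suc J) * ln 2"
      using ln_realpow[of 2 "Suc J"] by simp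
    moreover have "C \<le> real (Suc J) * \<bar>C\<bar>"
      using mult_right_mono[of 1 "real (Suc J)" "\<bar>C\<bar>"] by simp
    ultimately show ?thesis
      by (simp add: distrib_left)
  qed
  finally have ln_le: "ln (r ^ n / b) \<le> real (Suc J) * (ln 2 + \<bar>C\<bar>)" .
  have pos: "ln 2 + \<bar>C\<bar> > 0"
    by (simp add: add_pos_nonneg)
  have E: "E \<ge> 0"
    by (simp add: E_def dyadic_const_def)
  have "E / (ln 2 + \<bar>C\<bar>) * r powr (real n - 1) * ln (r ^ n / b)
      \<le> E / (ln 2 + \<bar>C\<bar>) * r powr (real n - 1) * (real (Suc J) * (ln 2 + \<bar>C\<bar>))"
    using pos E by (intro mult_left_mono ln_le) auto
  also have "\<dots> = E * r powr (real n - 1) * real (Suc J)"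
    using pos by simp
  finally have "E / (ln 2 + \<bar>C\<bar>) * r powr (real n - 1) * ln (r ^ n / b) \<le> E * r powr (real n - 1) * real (Suc J)" .
  moreover have "rhs n (1/2) (interaction_delta n (1/2) \<sigma>) (r ^ n) b
      = ennreal (E / (ln 2 + \<bar>C\<bar>) * r powr (real n - 1) * ln (r ^ n / b))"
    using b power_powr_divide[OF r n, of "real n - 1"]
    by (simp add: rhs_def interaction_delta_def E_def C_def)
  moreover have "(\<Sum>j\<le>J. dyadic_const n (1/2) \<sigma> * r powr (real n - 2 * (1/2)) * (2 ^ j) powr (2 * (1/2) - 1))
      = E * r powr (real n - 1) * real (Suc J)"
    by (simp add: E_def)
  ultimately show ?thesis
    by (metis ennreal_leI)
qed

lemma rhs_le_dyadic_sum_gt_half: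
  fixes r \<sigma> b s :: real
  assumes n: "n \<ge> 1" and r: "r > 0" and \<sigma>: "\<sigma> > 0" and b: "b > 0" and s: "s > 1/2"
    and J: "\<sigma>\<^sup>2 * r ^ n / (2 ^ (n + 1) * b) < 2 ^ Suc J"
  shows "rhs n s (interaction_delta n s \<sigma>) (r ^ n) b
     \<le> ennreal (\<Sum>j\<le>J. dyadic_const n s \<sigma> * r powr (real n - 2 * s) * (2 ^ j) powr (2 * s - 1))"
proof -
  define E where "E = dyadic_const n s \<sigma> * r powr (real n - 2 * s)"
  have E: "E \<ge> 0"
    by (simp add: E_def dyadic_const_def)
  have "\<sigma>\<^sup>2 / 2 ^ (n + 2) * (r ^ n / b) = \<sigma>\<^sup>2 * r ^ n / (2 ^ (n + 1) * b) / 2"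
    by simp
  then have "(\<sigma>\<^sup>2 / 2 ^ (n + 2)) powr (2 * s - 1) * (r ^ n / b) powr (2 * s - 1)
      = (\<sigma>\<^sup>2 * r ^ n / (2 ^ (n + 1) * b) / 2) powr (2 * s - 1)"
    using \<sigma> r b by (simp only: powr_mult[symmetric])
  also have "\<dots> \<le> (2 ^ J) powr (2 * s - 1)"
    using J \<sigma> r b s by (intro powr_mono2) auto
  finally have "E * ((\<sigma>\<^sup>2 / 2 ^ (n + 2)) powr (2 * s - 1) * (r ^ n / b) powr (2 * s - 1))
      \<le> E * (2 ^ J) powr (2 * s - 1)"
    using E by (rule mult_left_mono)
  also have "\<dots> \<le> (\<Sum>j\<le>J. E * (2 ^ j) powr (2 * s - 1))"
    using E by (intro member_le_sum) auto
  finally have "E * ((\<sigma>\<^sup>2 / 2 ^ (n + 2)) powr (2 * s - 1) * (r ^ n / b) powr (2 * s - 1))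
      \<le> (\<Sum>j\<le>J. E * (2 ^ j) powr (2 * s - 1))" .
  moreover have "rhs n s (interaction_delta n s \<sigma>) (r ^ n) b
      = ennreal (E * ((\<sigma>\<^sup>2 / 2 ^ (n + 2)) powr (2 * s - 1) * (r ^ n / b) powr (2 * s - 1)))"
    using b s power_powr_divide[OF r n, of "real n - 2 * s"]
    by (simp add: rhs_def interaction_delta_def E_def mult_ac)
  ultimately show ?thesis
    unfolding E_def by (metis ennreal_leI)
qed

lemma rhs_le_dyadic_sum:
  fixes r \<sigma> b s :: real
  assumes "n \<ge> 1" and "r > 0" and "\<sigma> > 0" and "b > 0" and "s \<ge> 1/2"
    and "\<sigma>\<^sup>2 * r ^ n / (2 ^ (n + 1) * b) < 2 ^ Suc J"
  shows "rhs n s (interaction_delta n s \<sigma>) (r ^ n) b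
     \<le> ennreal (\<Sum>j\<le>J. dyadic_const n s \<sigma> * r powr (real n - 2 * s) * (2 ^ j) powr (2 * s - 1))"
proof (cases "s = 1/2")
  case True
  then show ?thesis
    using rhs_le_dyadic_sum_half assms by blast
next
  case False
  then show ?thesis
    using rhs_le_dyadic_sum_gt_half assms by auto
qed

lemma ennreal_eq_top_if_multiples_le:
  fixes L :: ennreal and E :: real
  assumes E: "E > 0" and le: "\<And>J::nat. ennreal (real (Suc J) * E) \<le> L"
  shows "L = \<infinity>"
proof (rule ccontr)
  assume "L \<noteq> \<infinity>"
  then obtain l where l: "L = ennreal l" "l \<ge> 0"
    by (cases L) auto
  obtain J :: nat where "l / E < real J"
    using reals_Archimedean2 by blast
  then have "l < real (Suc J) * E"
    using E by (simp add: field_simps)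
  moreover have "real (Suc J) * E \<le> l"
    using le[of J] l by (simp add: ennreal_le_iff)
  ultimately show False
    by simp
qed

lemma dyadic_sum_ge_multiple:
  fixes E s :: real
  assumes "E \<ge> 0" "s \<ge> 1/2"
  shows "real (Suc J) * E \<le> (\<Sum>j\<le>J. E * (2 ^ j) powr (2 * s - 1))"
proof -
  have "E \<le> E * (2 ^ j) powr (2 * s - 1)" for j :: nat
  proof -
    have "1 \<le> (2 ^ j :: real) powr (2 * s - 1)"
      using assms by (intro ge_one_powr_ge_zero) auto
    then show ?thesis
      using mult_left_mono[OF _ assms(1)] by fastforce
  qed
  then show ?thesis
    using sum_mono[of "{..J}" "\<lambda>_. E" "\<lambda>j. E * (2 ^ j) powr (2 * s - 1)"] by simp
qed

lemma dyadic_gap_if_bracket: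
  fixes \<sigma> q b :: real
  assumes b: "b > 0" and q: "q \<ge> 0" and J: "2 ^ J \<le> max 1 (\<sigma>\<^sup>2 * q / (2 ^ (n + 1) * b))"
  shows "(2 ^ J - 1) * 2 ^ n * b \<le> \<sigma>\<^sup>2 * q / 2"
proof (cases "2 ^ J \<le> (1::real)")
  case True
  then have "(2 ^ J - 1) * 2 ^ n * b \<le> 0"
    using b by (simp add: mult_nonpos_nonneg)
  also have "0 \<le> \<sigma>\<^sup>2 * q / 2"
    using q by simp
  finally show ?thesis .
next
  case False
  then have "(2 ^ J - 1) * 2 ^ n * b \<le> \<sigma>\<^sup>2 * q / (2 ^ (n + 1) * b) * 2 ^ n * b"
    using J b by (intro mult_right_mono) auto
  also have "\<dots> = \<sigma>\<^sup>2 * q / 2"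
    using b by (simp add: field_simps)
  finally show ?thesis .
qed

lemma Lint_ge_rhs_borel:
  fixes A D :: "(real^'n) set" and a :: "real^'n" and r \<sigma> s :: real
  defines "Q \<equiv> cbox a (a + r *\<^sub>R One)"
  assumes [measurable]: "A \<in> sets borel" "D \<in> sets borel"
    and AQ: "A \<subseteq> Q" and DQ: "D \<subseteq> Q" and disj: "A \<inter> D = {}" and r: "r > 0" and s: "s \<ge> 1/2"
    and \<sigma>: "\<sigma> > 0" and mA: "\<sigma> * r ^ CARD('n) \<le> measure lborel A" and mD: "\<sigma> * r ^ CARD('n) \<le> measure lborel D"
  shows "rhs CARD('n) s (interaction_delta CARD('n) s \<sigma>) (r ^ CARD('n)) (measure lborel (Q - (A \<union> D)))
     \<le> Lint s A D"
proof -
  define b where "b = measure lborel (Q - (A \<union> D))"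
  define E where "E = dyadic_const CARD('n) s \<sigma> * r powr (real CARD('n) - 2 * s)"
  have sum_le: "ennreal (\<Sum>j\<le>J. E * (2 ^ j) powr (2 * s - 1)) \<le> Lint s A D"
    if "(2 ^ J - 1) * 2 ^ CARD('n) * b \<le> \<sigma>\<^sup>2 * r ^ CARD('n) / 2" for J
    using Lint_ge_dyadic_sum[of A D a r s \<sigma> J] that AQ DQ disj r s \<sigma> mA mD
    unfolding b_def E_def Q_def by simp
  show ?thesis
  proof (cases "b = 0")
    case True
    have "Lint s A D = \<infinity>"
    proof (rule ennreal_eq_top_if_multiples_le)
      show "E > 0"
        using \<sigma> r by (simp add: E_def dyadic_const_def)
      show "ennreal (real (Suc J) * E) \<le> Lint s A D" for J
        using dyadic_sum_ge_multiple[of E s J] sum_le[of J] True \<sigma> r s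
        by (auto simp: E_def dyadic_const_def intro: order_trans[OF ennreal_leI])
    qed
    then show ?thesis
      by simp
  next
    case False
    then have b: "b > 0"
      using measure_nonneg[of lborel "Q - (A \<union> D)"] unfolding b_def by linarith
    then have "\<sigma>\<^sup>2 * r ^ CARD('n) / (2 ^ (CARD('n) + 1) * b) > 0"
      using \<sigma> r by simp
    then obtain J where J: "2 ^ J \<le> max 1 (\<sigma>\<^sup>2 * r ^ CARD('n) / (2 ^ (CARD('n) + 1) * b))"
      "\<sigma>\<^sup>2 * r ^ CARD('n) / (2 ^ (CARD('n) + 1) * b) < 2 ^ Suc J"
      by (rule ex_dyadic_bracket)
    have "rhs CARD('n) s (interaction_delta CARD('n) s \<sigma>) (r ^ CARD('n)) b
        \<le> ennreal (\<Sum>j\<le>J. E * (2 ^ j) powr (2 * s - 1))"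
      unfolding E_def using rhs_le_dyadic_sum[OF _ r \<sigma> b s J(2)] by simp
    also have "\<dots> \<le> Lint s A D"
      using r by (intro sum_le dyadic_gap_if_bracket[OF b _ J(1)]) simp
    finally show ?thesis
      unfolding b_def .
  qed
qed

lemma lebesgue_set_inner_borel:
  assumes "A \<in> sets lebesgue"
  obtains A' where "A' \<in> sets borel" "A' \<subseteq> A" "A - A' \<in> null_sets lebesgue"
proof -
  obtain S N N' where "A = S \<union> N" "N \<subseteq> N'" "N' \<in> null_sets lborel" "S \<in> sets lborel"
    using sets_completionE[OF assms] .
  then show ?thesis
    using that[of S] unfolding null_sets_completion_iff2 by auto
qed

lemma measure_eq_if_null_diff:
  "S \<in> sets M \<Longrightarrow> S \<subseteq> T \<Longrightarrow> T - S \<in> null_sets M \<Longrightarrow> measure M T = measure M S"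
  by (metis Diff_partition measure_Un_null_set)

lemma Lint_ge_rhs:
  fixes A D :: "(real^'n) set" and a :: "real^'n" and r \<sigma> s :: real
  defines "Q \<equiv> cbox a (a + r *\<^sub>R One)"
  assumes A: "A \<in> sets lebesgue" and D: "D \<in> sets lebesgue"
    and AQ: "A \<subseteq> Q" and DQ: "D \<subseteq> Q" and disj: "A \<inter> D = {}" and r: "r > 0" and s: "s \<ge> 1/2"
    and \<sigma>: "\<sigma> > 0" and mA: "\<sigma> * r ^ CARD('n) \<le> measure lebesgue A"
    and mD: "\<sigma> * r ^ CARD('n) \<le> measure lebesgue D"
  shows "rhs CARD('n) s (interaction_delta CARD('n) s \<sigma>) (r ^ CARD('n)) (measure lebesgue (Q - (A \<union> D)))
     \<le> Lint s A D"
proof -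
  obtain A' where A'[measurable]: "A' \<in> sets borel" and "A' \<subseteq> A" and nA: "A - A' \<in> null_sets lebesgue"
    using lebesgue_set_inner_borel[OF A] .
  obtain D' where D'[measurable]: "D' \<in> sets borel" and "D' \<subseteq> D" and nD: "D - D' \<in> null_sets lebesgue"
    using lebesgue_set_inner_borel[OF D] .
  have [measurable]: "Q \<in> sets borel"
    unfolding Q_def by simp
  have measure_B: "measure lebesgue (Q - (A \<union> D)) = measure lborel (Q - (A' \<union> D'))"
  proof -
    have "Q - (A' \<union> D') - (Q - (A \<union> D)) \<in> null_sets lebesgue"
      using null_sets.Un[OF nA nD] by (rule null_sets_completion_subset[rotated]) auto
    moreover have "Q - (A \<union> D) \<in> sets lebesgue"
      using A D by auto
    ultimately have "measure lebesgue (Q - (A' \<union> D')) = measure lebesgue (Q - (A \<union> D))"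
      using \<open>A' \<subseteq> A\<close> \<open>D' \<subseteq> D\<close> by (intro measure_eq_if_null_diff) auto
    moreover have "measure lebesgue (Q - (A' \<union> D')) = measure lborel (Q - (A' \<union> D'))"
      by simp
    ultimately show ?thesis
      by metis
  qed
  have "measure lebesgue A = measure lborel A'" "measure lebesgue D = measure lborel D'"
    using measure_eq_if_null_diff[of A' lebesgue A] measure_eq_if_null_diff[of D' lebesgue D]
      \<open>A' \<subseteq> A\<close> \<open>D' \<subseteq> D\<close> nA nD by simp_all
  then have "rhs CARD('n) s (interaction_delta CARD('n) s \<sigma>) (r ^ CARD('n)) (measure lborel (Q - (A' \<union> D')))
      \<le> Lint s A' D'"
    unfolding Q_def
    by (intro Lint_ge_rhs_borel)
       (use \<open>A' \<subseteq> A\<close> \<open>D' \<subseteq> D\<close> AQ DQ disj r s \<sigma> mA mD in \<open>auto simp: Q_def\<close>)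
  also have "Lint s A' D' \<le> Lint s A D"
    unfolding Lint_def using \<open>A' \<subseteq> A\<close> \<open>D' \<subseteq> D\<close>
    by (intro nn_integral_mono mult_right_mono) (auto simp: indicator_def)
  finally show ?thesis
    unfolding measure_B .
qed

theorem proposition4p3:
  fixes s \<sigma> :: real
  assumes "CARD('n::finite) \<ge> 2"
    and "1/2 \<le> s" and "s < 1" and "\<sigma> > 0"
  shows "\<exists>\<delta>>0. \<forall>(Q :: (real ^ 'n) set) A D.
           is_cube Q \<longrightarrow> A \<in> sets lebesgue \<longrightarrow> D \<in> sets lebesgue \<longrightarrow>
           A \<subseteq> Q \<longrightarrow> D \<subseteq> Q \<longrightarrow> A \<inter> D = {} \<longrightarrow>
           min (measure lebesgue A) (measure lebesgue D) \<ge> \<sigma> * measure lebesgue Q \<longrightarrow>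
           Lint s A D \<ge> rhs CARD('n) s \<delta> (measure lebesgue Q) (measure lebesgue (Q - (A \<union> D)))"
  \<comment> \<open>The argument works for every dimension and every \<open>s \<ge> 1/2\<close>.\<close>
proof (intro exI[of _ "interaction_delta CARD('n) s \<sigma>"] conjI allI impI)
  show "interaction_delta CARD('n) s \<sigma> > 0"
    using assms(4) by (intro interaction_delta_pos) auto
  fix Q :: "(real ^ 'n) set" and A D
  assume "is_cube Q" and A: "A \<in> sets lebesgue" and D: "D \<in> sets lebesgue"
    and "A \<subseteq> Q" "D \<subseteq> Q" "A \<inter> D = {}"
    and m: "min (measure lebesgue A) (measure lebesgue D) \<ge> \<sigma> * measure lebesgue Q"
  then obtain a r where r: "r > 0" and Q: "Q = cbox a (a + r *\<^sub>R One)"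
    unfolding is_cube_def by blast
  have "measure lebesgue Q = r ^ CARD('n)"
    using emeasure_lborel_cube[OF r, of a] r unfolding Q by (simp add: measure_def)
  then show "rhs CARD('n) s (interaction_delta CARD('n) s \<sigma>) (measure lebesgue Q) (measure lebesgue (Q - (A \<union> D)))
      \<le> Lint s A D"
    using Lint_ge_rhs[OF A D, of a r s \<sigma>] \<open>A \<subseteq> Q\<close> \<open>D \<subseteq> Q\<close> \<open>A \<inter> D = {}\<close> r assms(2,4) m
    unfolding Q by simp
qed

end
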